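(* For each $n\ge1$, the number of spanning forests of $\Gamma_n$ equals $T_n(2,1)=T_{2,n}(2,1)+3N_n(2,1)+M_n(2,1)$, where, writing $T_2,N,M$ for $T_{2,n}(2,1),N_n(2,1),M_n(2,1)$, $$T_{2,n+1}(2,1)=6T_2^2N+3T_2N^2,$$ $$N_{n+1}(2,1)=T_2^2M+7T_2N^2+2T_2NM+4N^3+N^2M,$$ $$M_{n+1}(2,1)=12T_2NM+3T_2M^2+14N^3+24N^2M+9NM^2+M^3,$$ with $T_{2,1}(2,1)=3$, $N_1(2,1)=M_1(2,1)=1$.
   Context: Graphs are finite; multiple edges are allowed. For a graph $G$, a spanning subgraph $A$ has vertex set $V(G)$ and edge set $E(A)\subseteq E(G)$; $k(A)$ is its number of components, $r(A)=|V(G)|-k(A)$, $n(A)=|E(A)|-r(A)$; the weight of $A$ is $(x-1)^{r(G)-r(A)}(y-1)^{n(A)}$ and the Tutte polynomial $T(G;x,y)$ is the sum of the weights of all spanning subgraphs. Sierpiński graphs $\Gamma_n$ ($n\ge1$), each with three outmost vertices top, left, right: $\Gamma_1$ is the triangle $K_3$; $\Gamma_{n+1}$ is obtained from three disjoint copies $G_1,G_2,G_3$ of $\Gamma_n$ by identifying left$(G_1)$ with top$(G_2)$, right$(G_1)$ with top$(G_3)$, right$(G_2)$ with left$(G_3)$; its outmost vertices are top$(G_1)$, left$(G_2)$, right$(G_3)$. $T_n=T(\Gamma_n;x,y)$. $T_{2,n}$ (resp. $T_{1,n}$, $T_{0,n}$) is the sum of the weights of the spanning subgraphs of $\Gamma_n$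 in which the three outmost vertices lie in one component (resp. left and right outmost in one component, top in another; resp. the three in three distinct components). $N_n(x,y)=T_{1,n}/(x-1)$ and $M_n(x,y)=T_{0,n}/(x-1)^2$, which are polynomials. A spanning forest is an acyclic spanning subgraph. *)

theory Defs
  imports Main "HOL-Library.Multiset" Complex_Main
begin

text \<open>A finite multigraph is given by a list of edges; the edge identities are the
list positions (so parallel edges are allowed), each edge having two endpoints.
The vertex set is the set of endpoints (the Sierpinski graphs have no isolated vertices).\<close>

type_synonym 'v mgraph = "('v \<times> 'v) list"

definition verts :: "'v mgraph \<Rightarrow> 'v set" where
  "verts G = fst ` set G \<union> snd ` set G"

definition edges :: "'v mgraph \<Rightarrow> nat set" where
  "edges G = {..<length G}"

definition conn :: "'v mgraph \<Rightarrow> nat set \<Rightarrow> 'v \<Rightarrow> 'v \<Rightarrow> bool" where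
  "conn G A u v \<longleftrightarrow> (u, v) \<in> (\<Union>i\<in>A \<inter> edges G. {G ! i, prod.swap (G ! i)})\<^sup>*"

definition ncomp :: "'v mgraph \<Rightarrow> nat set \<Rightarrow> nat" where
  "ncomp G A = card ((\<lambda>u. {v \<in> verts G. conn G A u v}) ` verts G)"

definition rank :: "'v mgraph \<Rightarrow> nat set \<Rightarrow> nat" where
  "rank G A = card (verts G) - ncomp G A"

definition nullity :: "'v mgraph \<Rightarrow> nat set \<Rightarrow> nat" where
  "nullity G A = card A - rank G A"

definition tutte_weight :: "'v mgraph \<Rightarrow> real \<Rightarrow> real \<Rightarrow> nat set \<Rightarrow> real" where
  "tutte_weight G x y A = (x - 1) ^ (rank G (edges G) - rank G A) * (y - 1) ^ (nullity G A)"

definition tutte :: "'v mgraph \<Rightarrow> real \<Rightarrow> real \<Rightarrow> real" where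
  "tutte G x y = (\<Sum>A \<in> Pow (edges G). tutte_weight G x y A)"

definition has_cycle :: "'v mgraph \<Rightarrow> nat set \<Rightarrow> bool" where
  "has_cycle G A \<longleftrightarrow> (\<exists>es vs. es \<noteq> [] \<and> distinct es \<and> set es \<subseteq> A \<inter> edges G
      \<and> length vs = Suc (length es) \<and> hd vs = last vs
      \<and> (\<forall>i < length es. G ! (es ! i) = (vs ! i, vs ! Suc i)
                        \<or> G ! (es ! i) = (vs ! Suc i, vs ! i)))"

definition spanning_forests :: "'v mgraph \<Rightarrow> nat set set" where
  "spanning_forests G = {A. A \<subseteq> edges G \<and> \<not> has_cycle G A}"

text \<open>Vertices are lattice points; Gamma_n has top (0,0), left (2^(n-1),0), right (0,2^(n-1)).
Gamma_(n+1) consists of Gamma_n (G1), Gamma_n shifted by (2^(n-1),0) (G2, its top is left(G1))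
and Gamma_n shifted by (0,2^(n-1)) (G3, its top is right(G1), its left is right(G2)).\<close>

definition shift :: "nat \<times> nat \<Rightarrow> (nat \<times> nat) \<times> (nat \<times> nat) \<Rightarrow> (nat \<times> nat) \<times> (nat \<times> nat)" where
  "shift d e = ((fst (fst e) + fst d, snd (fst e) + snd d), (fst (snd e) + fst d, snd (snd e) + snd d))"

fun sierpinski :: "nat \<Rightarrow> (nat \<times> nat) mgraph" where
  "sierpinski 0 = []"
| "sierpinski (Suc 0) = [((0,0),(1,0)), ((0,0),(0,1)), ((1,0),(0,1))]"
| "sierpinski (Suc (Suc n)) =
     (let E = sierpinski (Suc n); s = 2 ^ n
      in E @ map (shift (s, 0)) E @ map (shift (0, s)) E)"

definition s_top :: "nat \<Rightarrow> nat \<times> nat" where "s_top n = (0, 0)"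
definition s_left :: "nat \<Rightarrow> nat \<times> nat" where "s_left n = (2 ^ (n - 1), 0)"
definition s_right :: "nat \<Rightarrow> nat \<times> nat" where "s_right n = (0, 2 ^ (n - 1))"

definition Tn :: "nat \<Rightarrow> real \<Rightarrow> real \<Rightarrow> real" where
  "Tn n x y = tutte (sierpinski n) x y"

definition T2n :: "nat \<Rightarrow> real \<Rightarrow> real \<Rightarrow> real" where
  "T2n n x y = (\<Sum>A \<in> {A \<in> Pow (edges (sierpinski n)).
      conn (sierpinski n) A (s_top n) (s_left n) \<and> conn (sierpinski n) A (s_top n) (s_right n)}.
      tutte_weight (sierpinski n) x y A)"

definition T1n :: "nat \<Rightarrow> real \<Rightarrow> real \<Rightarrow> real" where
  "T1n n x y = (\<Sum>A \<in> {A \<in> Pow (edges (sierpinski n)).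
      conn (sierpinski n) A (s_left n) (s_right n) \<and> \<not> conn (sierpinski n) A (s_top n) (s_left n)}.
      tutte_weight (sierpinski n) x y A)"

definition T0n :: "nat \<Rightarrow> real \<Rightarrow> real \<Rightarrow> real" where
  "T0n n x y = (\<Sum>A \<in> {A \<in> Pow (edges (sierpinski n)).
      \<not> conn (sierpinski n) A (s_top n) (s_left n) \<and> \<not> conn (sierpinski n) A (s_top n) (s_right n)
      \<and> \<not> conn (sierpinski n) A (s_left n) (s_right n)}.
      tutte_weight (sierpinski n) x y A)"

text \<open>N_n = T_{1,n}/(x-1), M_n = T_{0,n}/(x-1)^2 (as functions; they agree with the
polynomials wherever x \<noteq> 1, in particular at x = 2).\<close>
definition Nn :: "nat \<Rightarrow> real \<Rightarrow> real \<Rightarrow> real" where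
  "Nn n x y = T1n n x y / (x - 1)"

definition Mn :: "nat \<Rightarrow> real \<Rightarrow> real \<Rightarrow> real" where
  "Mn n x y = T0n n x y / (x - 1) ^ 2"

end

theory Submission
  imports Defs
begin

text \<open>
  The graph Gamma(n+2) is the image of three disjoint copies of Gamma(n+1) under a vertex map
  that identifies the three pairs of touching corners. Identifying vertices along a forest P of
  extra edges changes neither connectivity nor nullity, provided P is added to every edge set.
  Hence a spanning subgraph of Gamma(n+2) is a forest iff its three parts are forests and the
  three identifications close no cycle; this, and which of the outer corners of Gamma(n+2) are
  connected, depend only on which corners are connected inside each part. The numbers of
  spanning forests of Gamma(n+1) with each of the five possible connection patterns of the
  corners therefore obey a cubic recurrence, in which the three patterns joining exactly two
  corners have equal counts by symmetry. At (x, y) = (2, 1) the Tutte weight is the indicator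
  of acyclicity, so T(2,1) counts spanning forests and T2, N, M count those with the patterns
  "all corners joined", "only left and right joined" and "no corners joined".
\<close>

section \<open>Connectivity in multigraphs\<close>

definition edge_rel :: "'v mgraph \<Rightarrow> nat set \<Rightarrow> ('v \<times> 'v) set" where
  "edge_rel G A = (\<Union>i\<in>A \<inter> edges G. {G ! i, prod.swap (G ! i)})"

lemma conn_iff_rtrancl: "conn G A u v \<longleftrightarrow> (u, v) \<in> (edge_rel G A)\<^sup>*"
  by (simp add: conn_def edge_rel_def)

lemma converse_edge_rel [simp]: "(edge_rel G A)\<inverse> = edge_rel G A"
  unfolding edge_rel_def by (auto simp: prod.swap_def prod_eq_iff)

lemma edge_rel_iff:
  "(u, v) \<in> edge_rel G A \<longleftrightarrow> (\<exists>i\<in>A \<inter> edges G. G ! i = (u, v) \<or> G ! i = (v, u))"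
  unfolding edge_rel_def by (auto simp: prod.swap_def prod_eq_iff)

lemma conn_refl [simp]: "conn G A u u"
  by (simp add: conn_iff_rtrancl)

lemma conn_sym: "conn G A u v \<Longrightarrow> conn G A v u"
  by (metis conn_iff_rtrancl converse_edge_rel rtrancl_converseI)

lemma conn_trans: "conn G A u v \<Longrightarrow> conn G A v w \<Longrightarrow> conn G A u w"
  by (simp add: conn_iff_rtrancl)

lemma conn_commute: "conn G A u v \<longleftrightarrow> conn G A v u"
  by (meson conn_sym)

lemma conn_mono: "A \<subseteq> B \<Longrightarrow> conn G A u v \<Longrightarrow> conn G B u v"
  unfolding conn_iff_rtrancl edge_rel_def by (erule rtrancl_mono[THEN subsetD, rotated]) blast

lemma conn_edge: "i \<in> A \<Longrightarrow> i \<in> edges G \<Longrightarrow> G ! i = (a, b) \<Longrightarrow> conn G A a b"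
  unfolding conn_iff_rtrancl edge_rel_def by (rule r_into_rtrancl) force

lemma conn_empty [simp]: "conn G {} u v \<longleftrightarrow> u = v"
  by (simp add: conn_iff_rtrancl edge_rel_def)

lemma rtrancl_Un_sym_pair_iff:
  "(u, v) \<in> (R \<union> {(a, b), (b, a)})\<^sup>* \<longleftrightarrow>
     (u, v) \<in> R\<^sup>* \<or> (u, a) \<in> R\<^sup>* \<and> (b, v) \<in> R\<^sup>* \<or> (u, b) \<in> R\<^sup>* \<and> (a, v) \<in> R\<^sup>*"
  (is "?L \<longleftrightarrow> ?R")
proof
  show ?R if ?L
    using that
  proof (induction rule: rtrancl_induct)
    case (step y z)
    from step.hyps(2) show ?case
    proof
      assume "(y, z) \<in> R"
      with step.IH show ?thesis by (meson rtrancl.rtrancl_into_rtrancl)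
    qed (use step.IH in auto)
  qed simp
  have "R\<^sup>* \<subseteq> (R \<union> {(a, b), (b, a)})\<^sup>*"
    by (rule rtrancl_mono) blast
  moreover have "(a, b) \<in> (R \<union> {(a, b), (b, a)})\<^sup>*" "(b, a) \<in> (R \<union> {(a, b), (b, a)})\<^sup>*"
    by auto
  ultimately show ?L if ?R
    using that by (meson rtrancl_trans subsetD)
qed

lemma conn_insert_iff:
  assumes "e \<in> edges G" and "G ! e = (a, b)"
  shows "conn G (insert e A) u v \<longleftrightarrow>
    conn G A u v \<or> conn G A u a \<and> conn G A b v \<or> conn G A u b \<and> conn G A a v"
proof -
  have "edge_rel G (insert e A) = edge_rel G A \<union> {(a, b), (b, a)}"
    using assms by (auto simp: edge_rel_def)
  then show ?thesis
    by (simp only: conn_iff_rtrancl rtrancl_Un_sym_pair_iff)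
qed

lemma edge_in_verts:
  assumes "e \<in> edges G" and "G ! e = (a, b)"
  shows "a \<in> verts G \<and> b \<in> verts G"
proof -
  have "(a, b) \<in> set G"
    using assms by (metis edges_def lessThan_iff nth_mem)
  then show ?thesis
    by (force simp: verts_def)
qed

definition component :: "'v mgraph \<Rightarrow> nat set \<Rightarrow> 'v \<Rightarrow> 'v set" where
  "component G A u = {v \<in> verts G. conn G A u v}"

lemma ncomp_eq_card_components: "ncomp G A = card (component G A ` verts G)"
  by (simp add: ncomp_def component_def)

lemma finite_verts [simp]: "finite (verts G)"
  by (simp add: verts_def)

lemma conn_left_cong:
  assumes "conn G A u w"
  shows "conn G A u v \<longleftrightarrow> conn G A w v"
  using conn_trans[OF assms, of v] conn_trans[OF conn_sym[OF assms], of v] by blast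

lemma component_eq: "conn G A u v \<Longrightarrow> component G A u = component G A v"
  by (simp add: component_def conn_left_cong[of G A u v])

lemma component_eq_iff:
  assumes "u \<in> verts G"
  shows "component G A u = component G A v \<longleftrightarrow> conn G A u v"
proof
  assume eq: "component G A u = component G A v"
  have "u \<in> component G A u"
    using assms by (simp add: component_def)
  then have "u \<in> component G A v"
    unfolding eq .
  then have "conn G A v u"
    by (simp add: component_def)
  then show "conn G A u v"
    by (rule conn_sym)
qed (rule component_eq)

lemma ncomp_empty: "ncomp G {} = card (verts G)"
proof -
  have "component G {} ` verts G = (\<lambda>u. {u}) ` verts G"
    by (rule image_cong) (auto simp: component_def)
  then show ?thesis
    by (simp add: ncomp_eq_card_components card_image)
qed

lemma ncomp_le_card_verts: "ncomp G A \<le> card (verts G)"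
  by (simp add: ncomp_eq_card_components card_image_le)

lemma component_insert:
  assumes "e \<in> edges G" and "G ! e = (a, b)"
  shows "component G (insert e A) u =
    (if conn G A u a \<or> conn G A u b then component G A a \<union> component G A b else component G A u)"
proof -
  have "conn G (insert e A) u v \<longleftrightarrow> conn G A a v \<or> conn G A b v"
    if "conn G A u a \<or> conn G A u b" for v
    using that
  proof
    assume "conn G A u a"
    then show ?thesis
      by (auto simp: conn_insert_iff[OF assms] conn_left_cong[of G A u a])
  next
    assume "conn G A u b"
    then show ?thesis
      by (auto simp: conn_insert_iff[OF assms] conn_left_cong[of G A u b])
  qed
  then show ?thesis
    by (auto simp: component_def conn_insert_iff[OF assms])
qed

lemma ncomp_insert_conn:
  assumes "e \<in> edges G" and "G ! e = (a, b)" and "conn G A a b"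
  shows "ncomp G (insert e A) = ncomp G A"
proof -
  have "component G (insert e A) u = component G A u" for u
  proof (cases "conn G A u a \<or> conn G A u b")
    case True
    then have "component G A u = component G A a" "component G A a = component G A b"
      using component_eq[of G A u a] component_eq[of G A u b] component_eq[OF assms(3)] by auto
    then show ?thesis
      using component_insert[OF assms(1,2)] True by simp
  qed (simp add: component_insert[OF assms(1,2)])
  then show ?thesis
    by (simp add: ncomp_eq_card_components)
qed

lemma components_insert:
  fixes A :: "nat set"
  assumes e: "e \<in> edges G" and ab: "G ! e = (a, b)"
  defines "C \<equiv> component G A ` verts G" and "Ca \<equiv> component G A a" and "Cb \<equiv> component G A b"
  shows "component G (insert e A) ` verts G = insert (Ca \<union> Cb) (C - {Ca, Cb})"
proof -
  have a: "a \<in> verts G"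
    using edge_in_verts[OF e ab] by auto
  have apart: "component G A u \<noteq> Ca \<and> component G A u \<noteq> Cb \<longleftrightarrow> \<not> (conn G A u a \<or> conn G A u b)"
    if "u \<in> verts G" for u
    using component_eq_iff[OF that, of A a] component_eq_iff[OF that, of A b] by (simp add: Ca_def Cb_def)
  show ?thesis
  proof (intro equalityI subsetI)
    fix c assume "c \<in> component G (insert e A) ` verts G"
    then obtain u where u: "u \<in> verts G" and c: "c = component G (insert e A) u"
      by blast
    show "c \<in> insert (Ca \<union> Cb) (C - {Ca, Cb})"
    proof (cases "conn G A u a \<or> conn G A u b")
      case True
      then show ?thesis
        using component_insert[OF e ab, of A u] c by (simp add: Ca_def Cb_def)
    next
      case False
      then show ?thesis
        using component_insert[OF e ab, of A u] c apart[OF u] u by (simp add: C_def)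
    qed
  next
    fix c assume "c \<in> insert (Ca \<union> Cb) (C - {Ca, Cb})"
    then consider "c = Ca \<union> Cb" | u where "u \<in> verts G" "c = component G A u" "c \<noteq> Ca" "c \<noteq> Cb"
      unfolding C_def by blast
    then show "c \<in> component G (insert e A) ` verts G"
    proof cases
      case 1
      then have "c = component G (insert e A) a"
        using component_insert[OF e ab, of A a] by (simp add: Ca_def Cb_def)
      then show ?thesis
        using a by blast
    next
      case (2 u)
      then have "c = component G (insert e A) u"
        using component_insert[OF e ab, of A u] apart[OF 2(1)] by simp
      then show ?thesis
        using 2(1) by blast
    qed
  qed
qed

lemma ncomp_insert_not_conn:
  assumes e: "e \<in> edges G" and ab: "G ! e = (a, b)" and "\<not> conn G A a b"
  shows "Suc (ncomp G (insert e A)) = ncomp G A"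
proof -
  let ?C = "component G A ` verts G"
  let ?Ca = "component G A a" and ?Cb = "component G A b"
  have a: "a \<in> verts G" and b: "b \<in> verts G"
    using edge_in_verts[OF e ab] by auto
  have "?Ca \<noteq> ?Cb"
    using component_eq_iff[OF a] assms(3) by simp
  have merged: "?Ca \<union> ?Cb \<notin> ?C"
  proof
    assume "?Ca \<union> ?Cb \<in> ?C"
    then obtain u where u: "component G A u = ?Ca \<union> ?Cb"
      by blast
    have "a \<in> component G A u" and "b \<in> component G A u"
      unfolding u using a b by (simp_all add: component_def)
    then have "conn G A u a" and "conn G A u b"
      by (simp_all add: component_def)
    then show False
      using assms(3) conn_left_cong[of G A u a b] by simp
  qed
  have "card {?Ca, ?Cb} = 2" and "{?Ca, ?Cb} \<subseteq> ?C"
    using \<open>?Ca \<noteq> ?Cb\<close> a b by auto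
  then show ?thesis
    using merged card_mono[of ?C "{?Ca, ?Cb}"] components_insert[OF e ab, of A]
    by (simp add: ncomp_eq_card_components card_Diff_subset)
qed

section \<open>Nullity and cycles\<close>

lemma card_verts_le_card_plus_ncomp:
  assumes "A \<subseteq> edges G"
  shows "card (verts G) \<le> card A + ncomp G A"
proof -
  have "finite A"
    using assms finite_subset by (auto simp: edges_def)
  from this assms show ?thesis
  proof (induction A rule: finite_induct)
    case empty
    then show ?case by (simp add: ncomp_empty)
  next
    case (insert e A)
    obtain a b where e: "e \<in> edges G" and ab: "G ! e = (a, b)"
      using insert.prems by (meson insert_subset prod.exhaust)
    then show ?case
      using insert ncomp_insert_conn[OF e ab, of A] ncomp_insert_not_conn[OF e ab, of A]
      by (cases "conn G A a b") auto
  qed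
qed

lemma nullity_eq: "A \<subseteq> edges G \<Longrightarrow> nullity G A = card A + ncomp G A - card (verts G)"
  using card_verts_le_card_plus_ncomp[of A G] ncomp_le_card_verts[of G A]
  by (simp add: nullity_def rank_def)

lemma nullity_insert:
  assumes A: "A \<subseteq> edges G" and e: "e \<in> edges G" "e \<notin> A" and ab: "G ! e = (a, b)"
  shows "nullity G (insert e A) = nullity G A + of_bool (conn G A a b)"
proof -
  have "finite A"
    using A finite_subset by (auto simp: edges_def)
  then have "card (insert e A) = Suc (card A)"
    using e(2) by simp
  moreover have "insert e A \<subseteq> edges G"
    using A e by simp
  ultimately show ?thesis
    using nullity_eq[OF A] nullity_eq[of "insert e A" G] card_verts_le_card_plus_ncomp[OF A]
      ncomp_insert_conn[OF e(1) ab, of A] ncomp_insert_not_conn[OF e(1) ab, of A]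
    by (cases "conn G A a b") auto
qed

lemma nullity_empty [simp]: "nullity G {} = 0"
  by (simp add: nullity_eq ncomp_empty)

definition walk :: "'v mgraph \<Rightarrow> nat list \<Rightarrow> 'v list \<Rightarrow> bool" where
  "walk G es vs \<longleftrightarrow> length vs = Suc (length es) \<and> set es \<subseteq> edges G
     \<and> (\<forall>i<length es. G ! (es ! i) = (vs ! i, vs ! Suc i) \<or> G ! (es ! i) = (vs ! Suc i, vs ! i))"

lemma has_cycle_iff_closed_walk:
  "has_cycle G A \<longleftrightarrow> (\<exists>es vs. es \<noteq> [] \<and> distinct es \<and> set es \<subseteq> A \<and> walk G es vs \<and> hd vs = last vs)"
  unfolding has_cycle_def walk_def by blast

lemma walk_snoc:
  assumes "walk G es vs" and "e \<in> edges G" and "G ! e = (last vs, v) \<or> G ! e = (v, last vs)"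
  shows "walk G (es @ [e]) (vs @ [v])"
proof -
  have len: "length vs = Suc (length es)"
    using assms(1) by (simp add: walk_def)
  then have "last vs = vs ! length es"
    by (metis diff_Suc_1 last_conv_nth length_0_conv nat.distinct(1))
  then show ?thesis
    using assms len unfolding walk_def by (auto simp: nth_append less_Suc_eq)
qed

lemma walk_take: "walk G es vs \<Longrightarrow> j < length vs \<Longrightarrow> walk G (take j es) (take (Suc j) vs)"
  unfolding walk_def by (auto dest: in_set_takeD)

lemma conn_walk_segment:
  assumes "walk G es vs" and "j \<le> length es" and "i \<le> j" and "\<forall>m. i \<le> m \<and> m < j \<longrightarrow> es ! m \<in> B"
  shows "conn G B (vs ! i) (vs ! j)"
  using assms(2-4)
proof (induction j)
  case (Suc j)
  show ?case
  proof (cases "i = Suc j")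
    case False
    then have "conn G B (vs ! i) (vs ! j)" and "es ! j \<in> B"
      using Suc by auto
    moreover have "es ! j \<in> edges G" and
      "G ! (es ! j) = (vs ! j, vs ! Suc j) \<or> G ! (es ! j) = (vs ! Suc j, vs ! j)"
      using assms(1) Suc.prems(1) by (auto simp: walk_def)
    ultimately show ?thesis
      by (metis conn_edge conn_sym conn_trans)
  qed simp
qed simp

lemma conn_imp_path:
  assumes "conn G A u v"
  shows "\<exists>es vs. walk G es vs \<and> set es \<subseteq> A \<and> distinct vs \<and> hd vs = u \<and> last vs = v"
  using assms unfolding conn_iff_rtrancl
proof (induction rule: rtrancl_induct)
  case base
  show ?case
    by (rule exI[of _ "[]"], rule exI[of _ "[u]"]) (simp add: walk_def)
next
  case (step y z)
  obtain es vs where w: "walk G es vs" "set es \<subseteq> A" "distinct vs" "hd vs = u" "last vs = y"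
    using step.IH by blast
  obtain i where i: "i \<in> A" "i \<in> edges G" "G ! i = (y, z) \<or> G ! i = (z, y)"
    using step.hyps(2) unfolding edge_rel_def by (auto simp: prod_eq_iff)
  have len: "length vs = Suc (length es)"
    using w(1) by (simp add: walk_def)
  then have "vs \<noteq> []"
    by auto
  show ?case
  proof (cases "z \<in> set vs")
    case True
    then obtain j where j: "j < length vs" "vs ! j = z"
      by (auto simp: in_set_conv_nth)
    have "walk G (take j es) (take (Suc j) vs)"
      using walk_take[OF w(1) j(1)] .
    moreover have "last (take (Suc j) vs) = z"
      using j by (simp add: take_Suc_conv_app_nth)
    moreover have "hd (take (Suc j) vs) = u"
      using w(4) \<open>vs \<noteq> []\<close> by (cases vs) auto
    ultimately show ?thesis
      using w(2,3) by (metis distinct_take in_set_takeD subset_iff)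
  next
    case False
    have "walk G (es @ [i]) (vs @ [z])"
      using walk_snoc[OF w(1) i(2)] i(3) w(5) by auto
    moreover have "distinct (vs @ [z])"
      using w(3) False by simp
    moreover have "hd (vs @ [z]) = u"
      using w(4) \<open>vs \<noteq> []\<close> by simp
    moreover have "set (es @ [i]) \<subseteq> A"
      using w(2) i(1) by simp
    ultimately show ?thesis
      by (metis last_snoc)
  qed
qed

lemma path_distinct_edges:
  assumes w: "walk G es vs" and d: "distinct vs"
  shows "distinct es"
proof -
  have len: "length vs = Suc (length es)"
    using w by (simp add: walk_def)
  have "es ! i \<noteq> es ! j" if "i < j" "j < length es" for i j
  proof
    assume eq: "es ! i = es ! j"
    have step: "G ! (es ! k) = (vs ! k, vs ! Suc k) \<or> G ! (es ! k) = (vs ! Suc k, vs ! k)"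
      if "k < length es" for k
      using w that by (simp add: walk_def)
    have "vs ! i = vs ! j \<or> vs ! i = vs ! Suc j"
      using step[of i] step[of j] eq that by auto
    moreover have "vs ! i \<noteq> vs ! j" "vs ! i \<noteq> vs ! Suc j"
      using d that len by (simp_all add: nth_eq_iff_index_eq)
    ultimately show False
      by blast
  qed
  then show ?thesis
    unfolding distinct_conv_nth by (metis linorder_neqE_nat)
qed

lemma has_cycle_mono: "A \<subseteq> B \<Longrightarrow> has_cycle G A \<Longrightarrow> has_cycle G B"
  unfolding has_cycle_iff_closed_walk by blast

lemma has_cycle_insert_conn:
  assumes e: "e \<in> edges G" "e \<notin> A" and ab: "G ! e = (a, b)" and "conn G A a b"
  shows "has_cycle G (insert e A)"
proof -
  obtain es vs where w: "walk G es vs" "set es \<subseteq> A" "distinct vs" "hd vs = b" "last vs = a"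
    using conn_imp_path[OF conn_sym[OF assms(4)]] by blast
  have "vs \<noteq> []"
    using w(1) by (auto simp: walk_def)
  have "walk G (es @ [e]) (vs @ [b])"
    using walk_snoc[OF w(1) e(1)] ab w(5) by simp
  moreover have "distinct (es @ [e])"
    using path_distinct_edges[OF w(1,3)] w(2) e(2) by auto
  moreover have "hd (vs @ [b]) = last (vs @ [b])"
    using w(4) \<open>vs \<noteq> []\<close> by simp
  moreover have "set (es @ [e]) \<subseteq> insert e A" and "es @ [e] \<noteq> []"
    using w(2) by auto
  ultimately show ?thesis
    unfolding has_cycle_iff_closed_walk by blast
qed

text \<open>A cycle through a bridge would give a second connection between its ends.\<close>
lemma has_cycle_insert_not_conn:
  assumes e: "e \<in> edges G" and ab: "G ! e = (a, b)" and "\<not> conn G A a b"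
    and "has_cycle G (insert e A)"
  shows "has_cycle G A"
proof -
  obtain es vs where c: "es \<noteq> []" "distinct es" "set es \<subseteq> insert e A" "walk G es vs" "hd vs = last vs"
    using assms(4) unfolding has_cycle_iff_closed_walk by blast
  show ?thesis
  proof (cases "e \<in> set es")
    case False
    then show ?thesis
      using c unfolding has_cycle_iff_closed_walk by blast
  next
    case True
    then obtain k where k: "k < length es" "es ! k = e"
      by (auto simp: in_set_conv_nth)
    have len: "length vs = Suc (length es)"
      using c(4) by (simp add: walk_def)
    have others: "\<forall>m. m < length es \<and> m \<noteq> k \<longrightarrow> es ! m \<in> A"
    proof (intro allI impI)
      fix m assume m: "m < length es \<and> m \<noteq> k"
      then have "es ! m \<noteq> e"
        using k c(2) nth_eq_iff_index_eq by fastforce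
      moreover have "es ! m \<in> insert e A"
        using m c(3) nth_mem by blast
      ultimately show "es ! m \<in> A"
        by simp
    qed
    have "vs \<noteq> []"
      using len by auto
    then have "vs ! length es = vs ! 0"
      using c(5) len by (simp add: hd_conv_nth last_conv_nth)
    then have "conn G A (vs ! Suc k) (vs ! 0)"
      using conn_walk_segment[OF c(4), of "length es" "Suc k" A] k others by auto
    moreover have "conn G A (vs ! 0) (vs ! k)"
      using conn_walk_segment[OF c(4), of k 0 A] k others by auto
    ultimately have "conn G A (vs ! Suc k) (vs ! k)"
      by (rule conn_trans)
    moreover have "(a, b) = (vs ! k, vs ! Suc k) \<or> (a, b) = (vs ! Suc k, vs ! k)"
      using c(4) k ab unfolding walk_def by auto
    ultimately have "conn G A a b"
      using conn_sym[of G A "vs ! Suc k" "vs ! k"] by auto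
    with assms(3) show ?thesis ..
  qed
qed

lemma has_cycle_iff_nullity:
  assumes "A \<subseteq> edges G"
  shows "has_cycle G A \<longleftrightarrow> nullity G A \<noteq> 0"
proof -
  have "finite A"
    using assms finite_subset by (auto simp: edges_def)
  from this assms show ?thesis
  proof (induction A rule: finite_induct)
    case empty
    then show ?case by (simp add: has_cycle_iff_closed_walk nullity_eq ncomp_empty)
  next
    case (insert e A)
    obtain a b where e: "e \<in> edges G" and ab: "G ! e = (a, b)" and A: "A \<subseteq> edges G"
      using insert.prems by (meson insert_subset prod.exhaust)
    show ?case
      using nullity_insert[OF A e insert.hyps(2) ab] insert.IH[OF A]
        has_cycle_insert_conn[OF e insert.hyps(2) ab] has_cycle_insert_not_conn[OF e ab]
        has_cycle_mono[of A "insert e A" G]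
      by (cases "conn G A a b") auto
  qed
qed

lemma spanning_forests_nullity: "spanning_forests G = {A \<in> Pow (edges G). nullity G A = 0}"
  unfolding spanning_forests_def using has_cycle_iff_nullity by auto

lemma finite_spanning_forests: "finite (spanning_forests G)"
  unfolding spanning_forests_def by (auto simp: edges_def)

section \<open>Identifying vertices\<close>

lemma edge_rel_append: "A \<subseteq> edges G \<Longrightarrow> edge_rel (G @ P) A = edge_rel G A"
  unfolding edge_rel_def edges_def by (rule SUP_cong) (auto simp: nth_append)

lemma conn_append: "A \<subseteq> edges G \<Longrightarrow> conn (G @ P) A u v \<longleftrightarrow> conn G A u v"
  by (simp add: conn_iff_rtrancl edge_rel_append)

lemma verts_append: "verts (G @ P) = verts G \<union> verts P"
  by (auto simp: verts_def)

lemma verts_map: "verts (map (map_prod f f) G) = f ` verts G"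
  by (force simp: verts_def)

lemma edges_map [simp]: "edges (map g G) = edges G"
  by (simp add: edges_def)

lemma ncomp_cong:
  assumes "verts G = verts G'"
    and "\<And>u v. u \<in> verts G \<Longrightarrow> v \<in> verts G \<Longrightarrow> conn G A u v \<longleftrightarrow> conn G' A' u v"
  shows "ncomp G A = ncomp G' A'"
proof -
  have "component G A u = component G' A' u" if "u \<in> verts G" for u
    using assms that by (auto simp: component_def)
  then show ?thesis
    using assms(1) by (simp add: ncomp_eq_card_components cong: image_cong)
qed

lemma nullity_append:
  assumes "A \<subseteq> edges G" and "verts P \<subseteq> verts G"
  shows "nullity (G @ P) A = nullity G A"
proof -
  have v: "verts (G @ P) = verts G"
    using assms(2) by (auto simp: verts_append)
  then have "ncomp (G @ P) A = ncomp G A"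
    using conn_append[OF assms(1)] by (intro ncomp_cong) auto
  then show ?thesis
    unfolding nullity_def rank_def using v by simp
qed

text \<open>Identifying vertices of G along f has the same effect on connectivity as adding the edges
  P, which join exactly the vertices identified by f, and always selecting them.\<close>
locale vertex_quotient =
  fixes G :: "'a mgraph" and f :: "'a \<Rightarrow> 'b" and P :: "('a \<times> 'a) list"
  assumes identifies: "\<forall>p\<in>set P. f (fst p) = f (snd p)"
    and verts_P: "verts P \<subseteq> verts G"
    and kernel_conn: "\<forall>u\<in>verts G. \<forall>v\<in>verts G. f u = f v \<longrightarrow>
      conn (G @ P) {length G..<length G + length P} u v"
begin

abbreviation "image_graph \<equiv> map (map_prod f f) G"
abbreviation "glue \<equiv> {length G..<length G + length P}"

lemma verts_append_P: "verts (G @ P) = verts G"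
  using verts_P by (auto simp: verts_append)

lemma glue_conn:
  assumes "u \<in> verts G" and "v \<in> verts G" and "f u = f v"
  shows "conn (G @ P) (A \<union> glue) u v"
proof (rule conn_mono)
  show "conn (G @ P) glue u v"
    using kernel_conn assms by blast
qed blast

lemma conn_image_graph_of_conn:
  assumes "conn (G @ P) (A \<union> glue) u v" and "A \<subseteq> edges G"
  shows "conn image_graph A (f u) (f v)"
  using assms(1) unfolding conn_iff_rtrancl[of "G @ P"]
proof (induction rule: rtrancl_induct)
  case (step y z)
  from step.hyps(2) obtain i where i: "i \<in> (A \<union> glue) \<inter> edges (G @ P)"
    "(G @ P) ! i = (y, z) \<or> (G @ P) ! i = (z, y)"
    unfolding edge_rel_iff by blast
  show ?case
  proof (cases "i < length G")
    case True
    then have "G ! i = (y, z) \<or> G ! i = (z, y)"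
      using i(2) by (simp add: nth_append)
    then have "image_graph ! i = (f y, f z) \<or> image_graph ! i = (f z, f y)"
      using True by auto
    moreover have "i \<in> A" "i \<in> edges image_graph"
      using i(1) True by (auto simp: edges_def)
    ultimately have "conn image_graph A (f y) (f z)"
      using conn_edge[of i A image_graph "f y" "f z"] conn_edge[of i A image_graph "f z" "f y"]
        conn_sym[of image_graph A "f z" "f y"] by blast
    then show ?thesis
      using conn_trans[OF step.IH] by blast
  next
    case False
    then have "(G @ P) ! i \<in> set P"
      using i(1) by (auto simp: nth_append edges_def)
    then have "f y = f z"
      using identifies i(2) by auto
    then show ?thesis
      using step.IH by simp
  qed
qed simp

lemma conn_image_graph_lift:
  assumes A: "A \<subseteq> edges G" and u: "u \<in> verts G" and c: "conn image_graph A (f u) w"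
  shows "\<exists>u'\<in>verts G. f u' = w \<and> conn (G @ P) (A \<union> glue) u u'"
  using c unfolding conn_iff_rtrancl[of image_graph]
proof (induction rule: rtrancl_induct)
  case base
  then show ?case using u by auto
next
  case (step y z)
  then obtain u' where u': "u' \<in> verts G" "f u' = y" "conn (G @ P) (A \<union> glue) u u'"
    by blast
  from step.hyps(2) obtain i where i: "i \<in> A" "i < length G" "image_graph ! i = (y, z) \<or> image_graph ! i = (z, y)"
    unfolding edge_rel_iff edges_def by auto
  obtain a b where ab: "G ! i = (a, b)"
    by fastforce
  have a: "a \<in> verts G" and b: "b \<in> verts G"
    using edge_in_verts[of i G a b] i(2) ab by (auto simp: edges_def)
  have "i \<in> A \<union> glue" "i \<in> edges (G @ P)" "(G @ P) ! i = (a, b)"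
    using i ab by (auto simp: edges_def nth_append)
  then have ab_conn: "conn (G @ P) (A \<union> glue) a b"
    by (rule conn_edge)
  have "(f u' = f a \<and> z = f b) \<or> (f u' = f b \<and> z = f a)"
    using i(2,3) ab u'(2) by auto
  then show ?case
  proof
    assume "f u' = f a \<and> z = f b"
    then have "conn (G @ P) (A \<union> glue) u b"
      using glue_conn[OF u'(1) a] u'(3) conn_trans[OF conn_trans ab_conn] by blast
    then show ?thesis
      using b \<open>f u' = f a \<and> z = f b\<close> by blast
  next
    assume "f u' = f b \<and> z = f a"
    then have "conn (G @ P) (A \<union> glue) u a"
      using glue_conn[OF u'(1) b] u'(3) conn_trans[OF conn_trans conn_sym[OF ab_conn]] by blast
    then show ?thesis
      using a \<open>f u' = f b \<and> z = f a\<close> by blast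
  qed
qed

lemma conn_image_graph_iff:
  assumes "A \<subseteq> edges G" and "u \<in> verts G" and "v \<in> verts G"
  shows "conn image_graph A (f u) (f v) \<longleftrightarrow> conn (G @ P) (A \<union> glue) u v"
proof
  assume "conn image_graph A (f u) (f v)"
  then obtain u' where "u' \<in> verts G" "f u' = f v" "conn (G @ P) (A \<union> glue) u u'"
    using conn_image_graph_lift[OF assms(1,2)] by blast
  then show "conn (G @ P) (A \<union> glue) u v"
    using conn_trans[of "G @ P" "A \<union> glue" u u' v] glue_conn[of u' v A] assms(3) by blast
qed (use assms(1) conn_image_graph_of_conn in blast)


lemma component_image_graph:
  assumes A: "A \<subseteq> edges G" and u: "u \<in> verts G"
  shows "component image_graph A (f u) = f ` component (G @ P) (A \<union> glue) u"
proof (intro equalityI subsetI)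
  fix w assume "w \<in> component image_graph A (f u)"
  then obtain v where v: "v \<in> verts G" "w = f v" "conn image_graph A (f u) (f v)"
    by (auto simp: component_def verts_map)
  then show "w \<in> f ` component (G @ P) (A \<union> glue) u"
    using conn_image_graph_iff[OF A u v(1)] verts_append_P by (auto simp: component_def)
next
  fix w assume "w \<in> f ` component (G @ P) (A \<union> glue) u"
  then obtain v where v: "v \<in> verts G" "w = f v" "conn (G @ P) (A \<union> glue) u v"
    using verts_append_P by (auto simp: component_def)
  then show "w \<in> component image_graph A (f u)"
    using conn_image_graph_iff[OF A u v(1)] by (auto simp: component_def verts_map)
qed

lemma ncomp_image_graph:
  assumes A: "A \<subseteq> edges G"
  shows "ncomp image_graph A = ncomp (G @ P) (A \<union> glue)"
proof -
  let ?comp = "component (G @ P) (A \<union> glue)"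
  have "component image_graph A ` verts image_graph = (\<lambda>u. component image_graph A (f u)) ` verts G"
    by (simp add: verts_map image_image)
  also have "\<dots> = (\<lambda>u. f ` ?comp u) ` verts G"
    by (rule image_cong) (simp_all add: component_image_graph[OF A])
  also have "\<dots> = image f ` ?comp ` verts G"
    by (simp add: image_image)
  finally have "component image_graph A ` verts image_graph = image f ` ?comp ` verts G" .
  moreover have "inj_on (image f) (?comp ` verts G)"
  proof (rule inj_onI)
    fix c1 c2 assume "c1 \<in> ?comp ` verts G" "c2 \<in> ?comp ` verts G" and eq: "f ` c1 = f ` c2"
    then obtain u1 u2 where u: "u1 \<in> verts G" "c1 = ?comp u1" "u2 \<in> verts G" "c2 = ?comp u2"
      by blast
    then have "u2 \<in> c2"
      using verts_append_P by (simp add: component_def)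
    then obtain v where "v \<in> c1" "f v = f u2"
      using eq by (metis imageE imageI)
    then have "v \<in> verts G" "conn (G @ P) (A \<union> glue) u1 v" "f v = f u2"
      using u verts_append_P by (auto simp: component_def)
    then have "conn (G @ P) (A \<union> glue) u1 u2"
      using conn_trans[of "G @ P" "A \<union> glue" u1 v u2] glue_conn[of v u2 A] u(3) by blast
    then show "c1 = c2"
      using u(2,4) component_eq[of "G @ P" "A \<union> glue" u1 u2] by simp
  qed
  ultimately show ?thesis
    unfolding ncomp_eq_card_components using verts_append_P by (simp add: card_image)
qed

lemma nullity_image_graph:
  assumes A: "A \<subseteq> edges G" and forest: "nullity (G @ P) glue = 0"
  shows "nullity image_graph A = nullity (G @ P) (A \<union> glue)"
proof -
  have glue_sub: "glue \<subseteq> edges (G @ P)" and A_glue: "A \<union> glue \<subseteq> edges (G @ P)"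
    using A by (auto simp: edges_def)
  have "card (verts image_graph) = ncomp (G @ P) glue"
    using ncomp_image_graph[of "{}"] ncomp_empty[of image_graph] by simp
  moreover have "card (verts G) = card glue + ncomp (G @ P) glue"
    using nullity_eq[OF glue_sub] forest card_verts_le_card_plus_ncomp[OF glue_sub] verts_append_P
    by simp
  moreover have "card (A \<union> glue) = card A + card glue"
    using A finite_subset by (intro card_Un_disjoint) (auto simp: edges_def)
  ultimately show ?thesis
    using nullity_eq[of A image_graph] nullity_eq[OF A_glue] ncomp_image_graph[OF A] A verts_append_P
    by simp
qed

end

section \<open>Three disjoint copies\<close>

definition tag :: "nat \<Rightarrow> 'v \<times> 'v \<Rightarrow> (nat \<times> 'v) \<times> (nat \<times> 'v)" where
  "tag i = map_prod (Pair i) (Pair i)"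

definition copies3 :: "'v mgraph \<Rightarrow> (nat \<times> 'v) mgraph" where
  "copies3 E = map (tag 0) E @ map (tag 1) E @ map (tag 2) E"

text \<open>Edge i * length E + k of copies3 E is edge k of copy i.\<close>
definition part :: "'v mgraph \<Rightarrow> nat \<Rightarrow> nat set \<Rightarrow> nat set" where
  "part E i A = {k. k < length E \<and> i * length E + k \<in> A}"

definition assemble :: "'v mgraph \<Rightarrow> (nat \<Rightarrow> nat set) \<Rightarrow> nat set" where
  "assemble E g = {k. k < 3 * length E \<and> k mod length E \<in> g (k div length E)}"

lemma length_copies3 [simp]: "length (copies3 E) = 3 * length E"
  by (simp add: copies3_def)

lemma copy_index_div_mod:
  assumes "m < (L::nat)"
  shows "(i * L + m) div L = i" and "(i * L + m) mod L = m"
proof -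
  have "L \<noteq> 0"
    using assms by simp
  then show "(i * L + m) div L = i" and "(i * L + m) mod L = m"
    using assms div_mult_self1[of L m i] mod_mult_self1[of m i L] by (simp_all add: add.commute)
qed

lemma copy_index_less: "i < 3 \<Longrightarrow> m < (L::nat) \<Longrightarrow> i * L + m < 3 * L"
proof -
  assume "i < 3" and "m < L"
  then have "i * L + m < Suc i * L" and "Suc i * L \<le> 3 * L"
    by (simp_all add: mult_le_mono1)
  then show ?thesis
    by linarith
qed

lemma nth_copies3:
  assumes "i < 3" and "m < length E"
  shows "copies3 E ! (i * length E + m) = tag i (E ! m)"
proof -
  have "i = 0 \<or> i = 1 \<or> i = 2"
    using assms(1) by auto
  then show ?thesis
    using assms(2) by (auto simp: copies3_def nth_append)
qed

lemma nth_copies3_div_mod: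
  assumes "k < 3 * length E"
  shows "copies3 E ! k = tag (k div length E) (E ! (k mod length E))"
proof -
  have "length E > 0"
    using assms by auto
  moreover have "k div length E < 3"
    using assms by (simp add: less_mult_imp_div_less mult.commute)
  ultimately show ?thesis
    using nth_copies3[of "k div length E" "k mod length E" E] by simp
qed

lemma part_subset_edges: "part E i A \<subseteq> edges E"
  by (auto simp: part_def edges_def)

lemma conn_copies3_imp_part:
  assumes "conn (copies3 E) A (i, u) w"
  shows "fst w = i \<and> conn E (part E i A) u (snd w)"
  using assms unfolding conn_iff_rtrancl[of "copies3 E"]
proof (induction rule: rtrancl_induct)
  case (step y z)
  from step.hyps(2) obtain k where k: "k \<in> A" "k < 3 * length E"
    "copies3 E ! k = (y, z) \<or> copies3 E ! k = (z, y)"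
    unfolding edge_rel_iff edges_def by auto
  let ?t = "k div length E" and ?m = "k mod length E"
  obtain a b where ab: "E ! ?m = (a, b)"
    by fastforce
  have "copies3 E ! k = ((?t, a), (?t, b))"
    using nth_copies3_div_mod[OF k(2)] ab by (simp add: tag_def)
  then have t: "fst y = ?t" "fst z = ?t" and yz: "(snd y, snd z) = (a, b) \<or> (snd y, snd z) = (b, a)"
    using k(3) by auto
  then have "?t = i"
    using step.IH by simp
  moreover have "length E > 0"
    using k(2) by auto
  ultimately have "?m \<in> part E i A"
    using k(1) div_mult_mod_eq[of k "length E"] by (simp add: part_def)
  then have "conn E (part E i A) a b"
    using conn_edge[OF _ _ ab] \<open>length E > 0\<close> by (simp add: edges_def)
  then have "conn E (part E i A) (snd y) (snd z)"
    using yz conn_sym by auto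
  then show ?case
    using step.IH t \<open>?t = i\<close> conn_trans[of E "part E i A" u "snd y" "snd z"] by simp
qed simp

lemma conn_copies3_of_conn_part:
  assumes i: "i < 3" and c: "conn E (part E i A) u v"
  shows "conn (copies3 E) A (i, u) (i, v)"
  using c unfolding conn_iff_rtrancl[of E]
proof (induction rule: rtrancl_induct)
  case (step y z)
  from step.hyps(2) obtain m where m: "m \<in> part E i A" "E ! m = (y, z) \<or> E ! m = (z, y)"
    unfolding edge_rel_iff by auto
  then have m_less: "m < length E" and mA: "i * length E + m \<in> A"
    by (auto simp: part_def)
  then have "i * length E + m \<in> edges (copies3 E)"
    and "copies3 E ! (i * length E + m) = ((i, y), (i, z)) \<or> copies3 E ! (i * length E + m) = ((i, z), (i, y))"
    using copy_index_less[OF i m_less] nth_copies3[OF i m_less] m(2) by (auto simp: edges_def tag_def)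
  then have "conn (copies3 E) A (i, y) (i, z)"
    using conn_edge[of "i * length E + m" A "copies3 E"] mA conn_sym[of "copies3 E" A "(i, z)" "(i, y)"]
    by blast
  then show ?case
    using step.IH conn_trans[of "copies3 E" A "(i, u)" "(i, y)" "(i, z)"] by simp
qed simp

lemma conn_copies3_iff:
  "i < 3 \<Longrightarrow> conn (copies3 E) A (i, u) (j, v) \<longleftrightarrow> i = j \<and> conn E (part E i A) u v"
  using conn_copies3_imp_part[of E A i u "(j, v)"] conn_copies3_of_conn_part[of i E A u v] by auto

lemma part_insert:
  assumes "e < 3 * length E"
  shows "part E j (insert e A) =
    (if j = e div length E then insert (e mod length E) (part E j A) else part E j A)"
proof -
  have "length E > 0"
    using assms by auto
  moreover have "k < length E \<Longrightarrow> j * length E + k = e \<longleftrightarrow> j = e div length E \<and> k = e mod length E" for k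
    using copy_index_div_mod[of k "length E" j] div_mult_mod_eq[of e "length E"] by auto
  ultimately show ?thesis
    by (auto simp: part_def)
qed

lemma nullity_copies3:
  assumes "A \<subseteq> edges (copies3 E)"
  shows "nullity (copies3 E) A = (\<Sum>j<3. nullity E (part E j A))"
proof -
  have "finite A"
    using assms finite_subset by (auto simp: edges_def)
  from this assms show ?thesis
  proof (induction A rule: finite_induct)
    case empty
    then show ?case by (simp add: part_def nullity_eq ncomp_empty)
  next
    case (insert e A)
    let ?i = "e div length E" and ?m = "e mod length E"
    have e: "e < 3 * length E" and A: "A \<subseteq> edges (copies3 E)"
      using insert.prems by (auto simp: edges_def)
    then have i: "?i < 3" and m: "?m < length E"
      by (auto simp: less_mult_imp_div_less mult.commute intro: mod_less_divisor)
    have "?m \<notin> part E ?i A"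
      using insert.hyps(2) by (simp add: part_def)
    obtain a b where ab: "E ! ?m = (a, b)"
      by fastforce
    have "copies3 E ! e = ((?i, a), (?i, b))"
      using nth_copies3_div_mod[OF e] ab by (simp add: tag_def)
    moreover have "conn (copies3 E) A (?i, a) (?i, b) \<longleftrightarrow> conn E (part E ?i A) a b"
      using conn_copies3_iff[OF i, of E A a ?i b] by simp
    ultimately have "nullity (copies3 E) (insert e A) = nullity (copies3 E) A + of_bool (conn E (part E ?i A) a b)"
      using nullity_insert[OF A _ insert.hyps(2)] e by (simp add: edges_def)
    moreover have "nullity E (part E j (insert e A)) =
        nullity E (part E j A) + (if j = ?i then of_bool (conn E (part E ?i A) a b) else 0)" for j
      using nullity_insert[OF part_subset_edges _ \<open>?m \<notin> part E ?i A\<close> ab] m part_insert[OF e]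
      by (simp add: edges_def)
    ultimately show ?case
      using insert.IH[OF A] i by (simp add: sum.distrib)
  qed
qed

lemma part_assemble: "j < 3 \<Longrightarrow> g j \<subseteq> edges E \<Longrightarrow> part E j (assemble E g) = g j"
  using copy_index_less[of j] copy_index_div_mod[of _ "length E" j]
  by (auto simp: part_def assemble_def edges_def)

lemma assemble_subset_edges: "assemble E g \<subseteq> edges (copies3 E)"
  by (auto simp: assemble_def edges_def)

lemma assemble_cong: "(\<And>j. j < 3 \<Longrightarrow> g j = g' j) \<Longrightarrow> assemble E g = assemble E g'"
  unfolding assemble_def by (auto simp: less_mult_imp_div_less mult.commute)

lemma assemble_part:
  assumes "A \<subseteq> edges (copies3 E)"
  shows "assemble E (\<lambda>j. part E j A) = A"
proof -
  have "k < 3 * length E \<Longrightarrow> k mod length E < length E" for k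
    by (rule mod_less_divisor) auto
  then show ?thesis
    using assms by (auto simp: part_def assemble_def edges_def)
qed

section \<open>Sierpinski graphs as glued copies\<close>

text \<open>corner s k is the top (k = 0), left (k = 1) or right (k = 2) corner of a Sierpinski
  triangle of side s placed as in the definition of sierpinski, and place s moves copy i so
  that its top lands on corner s i.\<close>
definition corner :: "nat \<Rightarrow> nat \<Rightarrow> nat \<times> nat" where
  "corner s k = (if k = 1 then (s, 0) else if k = 2 then (0, s) else (0, 0))"

definition place :: "nat \<Rightarrow> nat \<times> (nat \<times> nat) \<Rightarrow> nat \<times> nat" where
  "place s v = (fst (snd v) + fst (corner s (fst v)), snd (snd v) + snd (corner s (fst v)))"

lemma place_tag: "map_prod (place s) (place s) (tag i e) = shift (corner s i) e"
  by (cases e) (simp add: tag_def place_def shift_def)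

lemma shift_0: "shift (0, 0) = id"
  by (auto simp: shift_def)

lemma sierpinski_Suc_Suc:
  "sierpinski (Suc (Suc n)) = map (map_prod (place (2 ^ n)) (place (2 ^ n))) (copies3 (sierpinski (Suc n)))"
  by (simp add: Let_def copies3_def place_tag corner_def shift_0 comp_def del: sierpinski.simps(3))
    (simp add: Let_def)

lemma verts_copies3: "verts (copies3 E) = (\<Union>i<3. Pair i ` verts E)"
  unfolding copies3_def tag_def by (auto simp: verts_append verts_map lessThan_nat_numeral)

lemma corner_Suc: "corner (2 ^ Suc n) k = place (2 ^ n) (k, corner (2 ^ n) k)"
  by (simp add: corner_def place_def)

lemma verts_sierpinski:
  "(\<forall>v\<in>verts (sierpinski (Suc n)). fst v + snd v \<le> 2 ^ n)
    \<and> (\<forall>k<3. corner (2 ^ n) k \<in> verts (sierpinski (Suc n)))"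
proof (induction n)
  case 0
  have "k < 3 \<Longrightarrow> k = 0 \<or> k = 1 \<or> k = 2" for k :: nat
    by auto
  then show ?case
    by (auto simp: verts_def corner_def)
next
  case (Suc n)
  have verts_eq: "verts (sierpinski (Suc (Suc n))) = place (2 ^ n) ` (\<Union>i<3. Pair i ` verts (sierpinski (Suc n)))"
    by (simp only: sierpinski_Suc_Suc verts_map verts_copies3)
  have "fst v + snd v \<le> 2 ^ Suc n" if v: "v \<in> verts (sierpinski (Suc (Suc n)))" for v
  proof -
    obtain i x where "v = place (2 ^ n) (i, x)" and "x \<in> verts (sierpinski (Suc n))"
      using v unfolding verts_eq by blast
    moreover have "fst (corner (2 ^ n) i) + snd (corner (2 ^ n) i) \<le> (2::nat) ^ n"
      by (simp add: corner_def)
    ultimately show ?thesis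
      using Suc.IH by (auto simp: place_def)
  qed
  moreover have "\<forall>k<3. corner (2 ^ Suc n) k \<in> verts (sierpinski (Suc (Suc n)))"
    using Suc.IH unfolding verts_eq corner_Suc by blast
  ultimately show ?case
    by blast
qed

definition glue_edges :: "nat \<Rightarrow> ((nat \<times> (nat \<times> nat)) \<times> (nat \<times> (nat \<times> nat))) list" where
  "glue_edges s = [((0, corner s 1), (1, corner s 0)), ((0, corner s 2), (2, corner s 0)),
     ((1, corner s 2), (2, corner s 1))]"

lemma place_eq_cases:
  assumes "i < 3" "j < 3" "fst x + snd x \<le> s" "fst y + snd y \<le> s"
    and "place s (i, x) = place s (j, y)"
  shows "i = j \<and> x = y \<or> (i, x, j, y) \<in> {(0, corner s 1, 1, corner s 0), (1, corner s 0, 0, corner s 1),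
    (0, corner s 2, 2, corner s 0), (2, corner s 0, 0, corner s 2),
    (1, corner s 2, 2, corner s 1), (2, corner s 1, 1, corner s 2)}"
proof -
  obtain x1 x2 y1 y2 where "x = (x1, x2)" "y = (y1, y2)"
    by fastforce
  moreover have "i = 0 \<or> i = 1 \<or> i = 2" "j = 0 \<or> j = 1 \<or> j = 2"
    using assms(1,2) by auto
  ultimately show ?thesis
    using assms(3-5) by (elim disjE; simp add: place_def corner_def; linarith)
qed

lemma nth_glue_edges:
  "(copies3 E @ glue_edges s) ! (3 * length E) = ((0, corner s 1), (1, corner s 0))"
  "(copies3 E @ glue_edges s) ! (3 * length E + 1) = ((0, corner s 2), (2, corner s 0))"
  "(copies3 E @ glue_edges s) ! (3 * length E + 2) = ((1, corner s 2), (2, corner s 1))"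
  by (simp_all add: nth_append glue_edges_def)

lemma glue_edge_indices:
  "{length (copies3 E)..<length (copies3 E) + length (glue_edges s)} =
    {3 * length E, 3 * length E + 1, 3 * length E + 2}"
  by (auto simp: glue_edges_def)

lemma glue_edges_in_edges:
  "3 * length E \<in> edges (copies3 E @ glue_edges s)"
  "3 * length E + 1 \<in> edges (copies3 E @ glue_edges s)"
  "3 * length E + 2 \<in> edges (copies3 E @ glue_edges s)"
  by (simp_all add: edges_def glue_edges_def)

lemma vertex_quotient_sierpinski:
  "vertex_quotient (copies3 (sierpinski (Suc n))) (place (2 ^ n)) (glue_edges (2 ^ n))"
proof
  let ?E = "sierpinski (Suc n)" and ?s = "(2::nat) ^ n"
  let ?glue = "{length (copies3 ?E)..<length (copies3 ?E) + length (glue_edges ?s)}"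
  have corners: "(i, corner ?s k) \<in> verts (copies3 ?E)" if "i < 3" "k < 3" for i k
    using verts_sierpinski[of n] that unfolding verts_copies3 by blast
  show "\<forall>p\<in>set (glue_edges ?s). place ?s (fst p) = place ?s (snd p)"
    by (simp add: glue_edges_def place_def corner_def)
  show "verts (glue_edges ?s) \<subseteq> verts (copies3 ?E)"
    using corners by (auto simp: glue_edges_def verts_def)
  have glued: "conn (copies3 ?E @ glue_edges ?s) ?glue (0, corner ?s 1) (1, corner ?s 0)"
    "conn (copies3 ?E @ glue_edges ?s) ?glue (0, corner ?s 2) (2, corner ?s 0)"
    "conn (copies3 ?E @ glue_edges ?s) ?glue (1, corner ?s 2) (2, corner ?s 1)"
    using conn_edge[OF _ glue_edges_in_edges(1) nth_glue_edges(1)]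
      conn_edge[OF _ glue_edges_in_edges(2) nth_glue_edges(2)]
      conn_edge[OF _ glue_edges_in_edges(3) nth_glue_edges(3)]
    unfolding glue_edge_indices by auto
  show "\<forall>u\<in>verts (copies3 ?E). \<forall>v\<in>verts (copies3 ?E). place ?s u = place ?s v \<longrightarrow>
      conn (copies3 ?E @ glue_edges ?s) ?glue u v"
  proof (intro ballI impI)
    fix u v assume "u \<in> verts (copies3 ?E)" "v \<in> verts (copies3 ?E)" and eq: "place ?s u = place ?s v"
    then obtain i x j y where u: "u = (i, x)" "i < 3" "x \<in> verts ?E" and v: "v = (j, y)" "j < 3" "y \<in> verts ?E"
      unfolding verts_copies3 by blast
    then have "fst x + snd x \<le> ?s" "fst y + snd y \<le> ?s"
      using verts_sierpinski[of n] by auto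
    then show "conn (copies3 ?E @ glue_edges ?s) ?glue u v"
      using place_eq_cases[OF u(2) v(2), of x ?s y] eq glued conn_sym unfolding u v by auto
  qed
qed

lemma nullity_glue_edges:
  assumes "s \<noteq> 0"
  shows "nullity (copies3 E @ glue_edges s)
    {length (copies3 E)..<length (copies3 E) + length (glue_edges s)} = 0"
proof -
  let ?G = "copies3 E @ glue_edges s" and ?L = "length E"
  note e = glue_edges_in_edges[of E s]
  have "nullity ?G {3 * ?L} = 0"
    using nullity_insert[of "{}" ?G, OF _ e(1) _ nth_glue_edges(1)] by (simp add: nullity_eq ncomp_empty)
  moreover have "\<not> conn ?G {3 * ?L} (0, corner s 2) (2, corner s 0)"
    using conn_insert_iff[OF e(1) nth_glue_edges(1), of "{}"] assms by (simp add: corner_def)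
  ultimately have "nullity ?G {3 * ?L + 1, 3 * ?L} = 0"
    using nullity_insert[of "{3 * ?L}" ?G, OF _ e(2) _ nth_glue_edges(2)] e by simp
  moreover have "\<not> conn ?G {3 * ?L + 1, 3 * ?L} (1, corner s 2) (2, corner s 1)"
    using conn_insert_iff[OF e(2) nth_glue_edges(2), of "{3 * ?L}"]
      conn_insert_iff[OF e(1) nth_glue_edges(1), of "{}"] assms by (simp add: corner_def)
  ultimately have "nullity ?G {3 * ?L + 2, 3 * ?L + 1, 3 * ?L} = 0"
    using nullity_insert[of "{3 * ?L + 1, 3 * ?L}" ?G, OF _ e(3) _ nth_glue_edges(3)] e by simp
  then show ?thesis
    unfolding glue_edge_indices by (simp add: insert_commute)
qed

section \<open>Gluing connection patterns\<close>

type_synonym pattern = "bool \<times> bool \<times> bool"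

definition terminal_pattern :: "'v mgraph \<Rightarrow> nat set \<Rightarrow> (nat \<Rightarrow> 'v) \<Rightarrow> pattern" where
  "terminal_pattern G A t = (conn G A (t 0) (t 1), conn G A (t 0) (t 2), conn G A (t 1) (t 2))"

text \<open>pattern_conn recognises a pair of distinct terminals among 0, 1, 2 by the sum of their
  indices.\<close>
definition pattern_conn :: "pattern \<Rightarrow> nat \<Rightarrow> nat \<Rightarrow> bool" where
  "pattern_conn p k k' = (if k = k' then True else if k + k' = 1 then fst p
     else if k + k' = 2 then fst (snd p) else snd (snd p))"

lemma conn_terminals:
  assumes "k < 3" "k' < 3"
  shows "conn G A (t k) (t k') = pattern_conn (terminal_pattern G A t) k k'"
proof -
  have "k = 0 \<or> k = 1 \<or> k = 2" "k' = 0 \<or> k' = 1 \<or> k' = 2"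
    using assms by auto
  then show ?thesis
    by (elim disjE) (simp_all add: pattern_conn_def terminal_pattern_def conn_commute)
qed

text \<open>Here (i, k) stands for corner k of copy i, and glue1, glue2, glue3 describe the
  connections after adding the first one, two and three edges of glue_edges.\<close>
definition copy_conn :: "(nat \<Rightarrow> pattern) \<Rightarrow> nat \<times> nat \<Rightarrow> nat \<times> nat \<Rightarrow> bool" where
  "copy_conn ps x y = (fst x = fst y \<and> pattern_conn (ps (fst x)) (snd x) (snd y))"

definition join_conn :: "('k \<Rightarrow> 'k \<Rightarrow> bool) \<Rightarrow> 'k \<Rightarrow> 'k \<Rightarrow> 'k \<Rightarrow> 'k \<Rightarrow> bool" where
  "join_conn g a b u v = (g u v \<or> g u a \<and> g b v \<or> g u b \<and> g a v)"

definition "glue1 ps = join_conn (copy_conn ps) (0, 1) (1, 0)"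
definition "glue2 ps = join_conn (glue1 ps) (0, 2) (2, 0)"
definition "glue3 ps = join_conn (glue2 ps) (1, 2) (2, 1)"

definition glue_acyclic :: "(nat \<Rightarrow> pattern) \<Rightarrow> bool" where
  "glue_acyclic ps = (\<not> copy_conn ps (0, 1) (1, 0) \<and> \<not> glue1 ps (0, 2) (2, 0) \<and> \<not> glue2 ps (1, 2) (2, 1))"

definition glue_pattern :: "(nat \<Rightarrow> pattern) \<Rightarrow> pattern" where
  "glue_pattern ps = (glue3 ps (0, 0) (1, 1), glue3 ps (0, 0) (2, 2), glue3 ps (1, 1) (2, 2))"

definition slot :: "nat \<Rightarrow> nat \<times> nat \<Rightarrow> nat \<times> (nat \<times> nat)" where
  "slot s x = (fst x, corner s (snd x))"

abbreviation slots :: "(nat \<times> nat) set" where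
  "slots \<equiv> {..<3} \<times> {..<3}"

lemma conn_insert_join_conn:
  assumes "e \<in> edges G" and "G ! e = (slot s a, slot s b)" and "a \<in> slots" "b \<in> slots"
    and "\<And>x y. x \<in> slots \<Longrightarrow> y \<in> slots \<Longrightarrow> conn G B (slot s x) (slot s y) = g x y"
    and "x \<in> slots" "y \<in> slots"
  shows "conn G (insert e B) (slot s x) (slot s y) = join_conn g a b x y"
  using conn_insert_iff[OF assms(1,2), of B "slot s x" "slot s y"] assms(3-7) by (simp add: join_conn_def)

lemma conn_copies3_slots:
  assumes "x \<in> slots" and "y \<in> slots"
  shows "conn (copies3 E) A (slot s x) (slot s y) = copy_conn (\<lambda>i. terminal_pattern E (part E i A) (corner s)) x y"
proof -
  have "conn (copies3 E) A (slot s x) (slot s y) \<longleftrightarrow>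
      fst x = fst y \<and> conn E (part E (fst x) A) (corner s (snd x)) (corner s (snd y))"
    unfolding slot_def using assms(1) by (intro conn_copies3_iff) auto
  then show ?thesis
    using conn_terminals[of "snd x" "snd y" E "part E (fst x) A" "corner s"] assms
    by (auto simp: copy_conn_def mem_Times_iff)
qed

lemma conn_glued_slots:
  fixes E :: "(nat \<times> nat) mgraph" and s :: nat
  assumes A: "A \<subseteq> edges (copies3 E)" and xy: "x \<in> slots" "y \<in> slots"
  defines "G \<equiv> copies3 E @ glue_edges s" and "L \<equiv> length E"
    and "ps \<equiv> \<lambda>i. terminal_pattern E (part E i A) (corner s)"
  shows "conn G A (slot s x) (slot s y) = copy_conn ps x y"
    and "conn G (insert (3 * L) A) (slot s x) (slot s y) = glue1 ps x y"
    and "conn G (insert (3 * L + 1) (insert (3 * L) A)) (slot s x) (slot s y) = glue2 ps x y"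
    and "conn G (insert (3 * L + 2) (insert (3 * L + 1) (insert (3 * L) A))) (slot s x) (slot s y) = glue3 ps x y"
proof -
  have glue_slots: "G ! (3 * L) = (slot s (0, 1), slot s (1, 0))"
    "G ! (3 * L + 1) = (slot s (0, 2), slot s (2, 0))" "G ! (3 * L + 2) = (slot s (1, 2), slot s (2, 1))"
    using nth_glue_edges[of E s] by (simp_all add: G_def L_def slot_def)
  note e = glue_edges_in_edges[of E s, folded G_def L_def]
  have c0: "conn G A (slot s x) (slot s y) = copy_conn ps x y" if "x \<in> slots" "y \<in> slots" for x y
    using conn_append[OF A] conn_copies3_slots[OF that] by (simp add: G_def ps_def)
  have c1: "conn G (insert (3 * L) A) (slot s x) (slot s y) = glue1 ps x y" if "x \<in> slots" "y \<in> slots" for x y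
    unfolding glue1_def by (rule conn_insert_join_conn[OF e(1) glue_slots(1) _ _ c0 that]) simp_all
  have c2: "conn G (insert (3 * L + 1) (insert (3 * L) A)) (slot s x) (slot s y) = glue2 ps x y"
    if "x \<in> slots" "y \<in> slots" for x y
    unfolding glue2_def by (rule conn_insert_join_conn[OF e(2) glue_slots(2) _ _ c1 that]) simp_all
  have c3: "conn G (insert (3 * L + 2) (insert (3 * L + 1) (insert (3 * L) A))) (slot s x) (slot s y) = glue3 ps x y"
    if "x \<in> slots" "y \<in> slots" for x y
    unfolding glue3_def by (rule conn_insert_join_conn[OF e(3) glue_slots(3) _ _ c2 that]) simp_all
  show "conn G A (slot s x) (slot s y) = copy_conn ps x y"
    and "conn G (insert (3 * L) A) (slot s x) (slot s y) = glue1 ps x y"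
    and "conn G (insert (3 * L + 1) (insert (3 * L) A)) (slot s x) (slot s y) = glue2 ps x y"
    and "conn G (insert (3 * L + 2) (insert (3 * L + 1) (insert (3 * L) A))) (slot s x) (slot s y) = glue3 ps x y"
    using c0[OF xy] c1[OF xy] c2[OF xy] c3[OF xy] .
qed

lemma nullity_glued_copies3:
  fixes E :: "(nat \<times> nat) mgraph" and s :: nat
  assumes A: "A \<subseteq> edges (copies3 E)" and verts: "verts (glue_edges s) \<subseteq> verts (copies3 E)"
  defines "ps \<equiv> \<lambda>i. terminal_pattern E (part E i A) (corner s)"
  shows "nullity (copies3 E @ glue_edges s) (A \<union> {length (copies3 E)..<length (copies3 E) + length (glue_edges s)}) =
    (\<Sum>j<3. nullity E (part E j A)) + of_bool (copy_conn ps (0, 1) (1, 0))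
      + of_bool (glue1 ps (0, 2) (2, 0)) + of_bool (glue2 ps (1, 2) (2, 1))"
proof -
  let ?G = "copies3 E @ glue_edges s" and ?L = "length E"
  note e = glue_edges_in_edges[of E s]
  have A': "A \<subseteq> edges ?G"
    using A by (auto simp: edges_def)
  have fresh: "3 * ?L \<notin> A" "3 * ?L + 1 \<notin> A" "3 * ?L + 2 \<notin> A"
    using A by (auto simp: edges_def)
  have glue_slots: "?G ! (3 * ?L) = (slot s (0, 1), slot s (1, 0))"
    "?G ! (3 * ?L + 1) = (slot s (0, 2), slot s (2, 0))" "?G ! (3 * ?L + 2) = (slot s (1, 2), slot s (2, 1))"
    using nth_glue_edges[of E s] by (simp_all add: slot_def)
  have "nullity ?G A = (\<Sum>j<3. nullity E (part E j A))"
    using nullity_append[OF A verts] nullity_copies3[OF A] by simp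
  moreover have "nullity ?G (insert (3 * ?L) A) = nullity ?G A + of_bool (copy_conn ps (0, 1) (1, 0))"
    using nullity_insert[OF A' e(1) fresh(1) glue_slots(1)] conn_glued_slots(1)[OF A, of "(0, 1)" "(1, 0)"]
    by (simp add: ps_def)
  moreover have "nullity ?G (insert (3 * ?L + 1) (insert (3 * ?L) A)) =
      nullity ?G (insert (3 * ?L) A) + of_bool (glue1 ps (0, 2) (2, 0))"
    using nullity_insert[of "insert (3 * ?L) A", OF _ e(2) _ glue_slots(2)] A' e(1) fresh
      conn_glued_slots(2)[OF A, of "(0, 2)" "(2, 0)"]
    by (simp add: ps_def)
  moreover have "nullity ?G (insert (3 * ?L + 2) (insert (3 * ?L + 1) (insert (3 * ?L) A))) =
      nullity ?G (insert (3 * ?L + 1) (insert (3 * ?L) A)) + of_bool (glue2 ps (1, 2) (2, 1))"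
    using nullity_insert[of "insert (3 * ?L + 1) (insert (3 * ?L) A)", OF _ e(3) _ glue_slots(3)] A' e(1,2) fresh
      conn_glued_slots(3)[OF A, of "(1, 2)" "(2, 1)"]
    by (simp add: ps_def)
  ultimately show ?thesis
    unfolding glue_edge_indices by (simp add: insert_commute)
qed

lemma corner_Suc_slot: "corner (2 ^ Suc n) k = place (2 ^ n) (slot (2 ^ n) (k, k))"
  by (simp add: corner_def place_def slot_def)

lemma sierpinski_Suc_Suc_glue:
  fixes n :: nat and A :: "nat set"
  defines "E \<equiv> sierpinski (Suc n)" and "s \<equiv> (2::nat) ^ n"
  defines "ps \<equiv> \<lambda>i. terminal_pattern E (part E i A) (corner s)"
  assumes A: "A \<subseteq> edges (sierpinski (Suc (Suc n)))"
  shows "nullity (sierpinski (Suc (Suc n))) A = 0 \<longleftrightarrow> (\<forall>j<3. nullity E (part E j A) = 0) \<and> glue_acyclic ps"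
    and "terminal_pattern (sierpinski (Suc (Suc n))) A (corner (2 ^ Suc n)) = glue_pattern ps"
proof -
  interpret vertex_quotient "copies3 E" "place s" "glue_edges s"
    unfolding E_def s_def by (rule vertex_quotient_sierpinski)
  have S: "sierpinski (Suc (Suc n)) = image_graph"
    unfolding E_def s_def by (rule sierpinski_Suc_Suc)
  have AE: "A \<subseteq> edges (copies3 E)"
    using A S by simp
  have "nullity (sierpinski (Suc (Suc n))) A = (\<Sum>j<3. nullity E (part E j A)) + of_bool (copy_conn ps (0, 1) (1, 0))
      + of_bool (glue1 ps (0, 2) (2, 0)) + of_bool (glue2 ps (1, 2) (2, 1))"
    using nullity_image_graph[OF AE] nullity_glue_edges[of s E] nullity_glued_copies3[OF AE verts_P] S
    by (simp add: s_def ps_def)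
  then show "nullity (sierpinski (Suc (Suc n))) A = 0 \<longleftrightarrow> (\<forall>j<3. nullity E (part E j A) = 0) \<and> glue_acyclic ps"
    by (auto simp: glue_acyclic_def)
  have slot_verts: "slot s x \<in> verts (copies3 E)" if x: "x \<in> slots" for x
  proof -
    obtain i k where "x = (i, k)" "i < 3" "k < 3"
      using x by blast
    then show ?thesis
      using verts_sierpinski[of n] unfolding verts_copies3 E_def s_def slot_def by auto
  qed
  have "conn (sierpinski (Suc (Suc n))) A (place s (slot s x)) (place s (slot s y)) = glue3 ps x y"
    if "x \<in> slots" "y \<in> slots" for x y
    using conn_image_graph_iff[OF AE slot_verts[OF that(1)] slot_verts[OF that(2)]] S
      conn_glued_slots(4)[OF AE that, of s] glue_edge_indices[of E s]
    by (simp add: ps_def insert_commute)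
  then show "terminal_pattern (sierpinski (Suc (Suc n))) A (corner (2 ^ Suc n)) = glue_pattern ps"
    unfolding terminal_pattern_def glue_pattern_def corner_Suc_slot s_def[symmetric] by simp
qed

lemma glue_cong:
  assumes "\<And>i. i < 3 \<Longrightarrow> ps i = qs i"
  shows "glue_acyclic ps = glue_acyclic qs" and "glue_pattern ps = glue_pattern qs"
  using assms[of 0] assms[of 1] assms[of 2]
  by (simp_all add: glue_acyclic_def glue_pattern_def glue3_def glue2_def glue1_def copy_conn_def join_conn_def)

section \<open>Counting spanning forests by pattern\<close>

definition glues_to :: "(nat \<Rightarrow> pattern) \<Rightarrow> pattern \<Rightarrow> bool" where
  "glues_to ps q \<longleftrightarrow> glue_acyclic ps \<and> glue_pattern ps = q"

definition patterns :: "pattern set" where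
  "patterns = {(True, True, True), (True, False, False), (False, True, False), (False, False, True),
    (False, False, False)}"

lemma terminal_pattern_in_patterns: "terminal_pattern G A t \<in> patterns"
  unfolding terminal_pattern_def patterns_def
  using conn_trans[of G A "t 0" "t 1" "t 2"] conn_trans[of G A "t 0" "t 2" "t 1"]
    conn_trans[of G A "t 1" "t 0" "t 2"] conn_sym[of G A "t 0" "t 1"] conn_sym[of G A "t 2" "t 1"]
    conn_sym[of G A "t 1" "t 2"]
  by auto

definition outer_pattern :: "nat \<Rightarrow> nat set \<Rightarrow> pattern" where
  "outer_pattern n A = terminal_pattern (sierpinski n) A (corner (2 ^ (n - 1)))"

lemma outer_corners:
  "corner (2 ^ (n - 1)) 0 = s_top n" "corner (2 ^ (n - 1)) 1 = s_left n" "corner (2 ^ (n - 1)) 2 = s_right n"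
  by (simp_all add: corner_def s_top_def s_left_def s_right_def)

definition forest_count :: "nat \<Rightarrow> pattern \<Rightarrow> nat" where
  "forest_count n p = card {A \<in> spanning_forests (sierpinski n). outer_pattern n A = p}"

lemma spanning_forests_Suc_Suc_iff:
  fixes n :: nat and A :: "nat set"
  defines "E \<equiv> sierpinski (Suc n)"
  defines "qs \<equiv> (!) [outer_pattern (Suc n) (part E 0 A), outer_pattern (Suc n) (part E 1 A),
    outer_pattern (Suc n) (part E 2 A)]"
  assumes A: "A \<subseteq> edges (sierpinski (Suc (Suc n)))"
  shows "A \<in> spanning_forests (sierpinski (Suc (Suc n))) \<and> outer_pattern (Suc (Suc n)) A = q \<longleftrightarrow>
    (\<forall>j<3. part E j A \<in> spanning_forests E) \<and> glues_to qs q"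
proof -
  let ?ps = "\<lambda>i. terminal_pattern E (part E i A) (corner (2 ^ n))"
  have "?ps i = qs i" if "i < 3" for i
  proof -
    have "i = 0 \<or> i = 1 \<or> i = 2"
      using that by auto
    then show ?thesis
      by (auto simp: outer_pattern_def E_def qs_def)
  qed
  note cong = glue_cong[of ?ps qs, OF this]
  have "part E j A \<in> spanning_forests E \<longleftrightarrow> nullity E (part E j A) = 0" for j
    using part_subset_edges[of E j A] by (simp add: spanning_forests_nullity)
  moreover have "outer_pattern (Suc (Suc n)) A = glue_pattern qs"
    using sierpinski_Suc_Suc_glue(2)[OF A] cong(2) by (simp add: outer_pattern_def E_def)
  ultimately show ?thesis
    using sierpinski_Suc_Suc_glue(1)[OF A] cong(1) A unfolding E_def spanning_forests_nullity glues_to_def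
    by (simp only: mem_Collect_eq Pow_iff) blast
qed

lemma less_3_cases: "(j::nat) < 3 \<Longrightarrow> j = 0 \<or> j = 1 \<or> j = 2"
  by auto

lemma bij_betw_parts:
  fixes n :: nat and q :: "pattern"
  defines "E \<equiv> sierpinski (Suc n)"
  defines "X \<equiv> {A \<in> spanning_forests (sierpinski (Suc (Suc n))). outer_pattern (Suc (Suc n)) A = q}"
    and "Y \<equiv> {(a, b, c). a \<in> spanning_forests E \<and> b \<in> spanning_forests E \<and> c \<in> spanning_forests E
      \<and> glues_to ((!) [outer_pattern (Suc n) a, outer_pattern (Suc n) b, outer_pattern (Suc n) c]) q}"
  shows "bij_betw (\<lambda>A. (part E 0 A, part E 1 A, part E 2 A)) X Y"
proof (rule bij_betw_byWitness[where f' = "\<lambda>(a, b, c). assemble E ((!) [a, b, c])"])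
  have edges_eq: "edges (sierpinski (Suc (Suc n))) = edges (copies3 E)"
    unfolding E_def sierpinski_Suc_Suc by simp
  have forest_edges: "A \<subseteq> edges G" if "A \<in> spanning_forests G" for A and G :: "'v mgraph"
    using that by (simp add: spanning_forests_def)
  have parts_assemble: "part E j (assemble E ((!) [a, b, c])) = [a, b, c] ! j"
    if "a \<in> spanning_forests E" "b \<in> spanning_forests E" "c \<in> spanning_forests E" "j < 3" for a b c j
    using part_assemble[of j "(!) [a, b, c]" E] less_3_cases[OF that(4)] forest_edges[OF that(1)]
      forest_edges[OF that(2)] forest_edges[OF that(3)] that(4) by auto
  show "\<forall>A\<in>X. (\<lambda>(a, b, c). assemble E ((!) [a, b, c])) (part E 0 A, part E 1 A, part E 2 A) = A"
  proof
    fix A assume "A \<in> X"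
    then have "A \<subseteq> edges (copies3 E)"
      using forest_edges edges_eq by (auto simp: X_def)
    moreover have "assemble E ((!) [part E 0 A, part E 1 A, part E 2 A]) = assemble E (\<lambda>j. part E j A)"
      by (rule assemble_cong) (auto dest: less_3_cases)
    ultimately show "(\<lambda>(a, b, c). assemble E ((!) [a, b, c])) (part E 0 A, part E 1 A, part E 2 A) = A"
      by (simp add: assemble_part)
  qed
  show "\<forall>t\<in>Y. (\<lambda>A. (part E 0 A, part E 1 A, part E 2 A)) ((\<lambda>(a, b, c). assemble E ((!) [a, b, c])) t) = t"
    using parts_assemble by (auto simp: Y_def)
  show "(\<lambda>A. (part E 0 A, part E 1 A, part E 2 A)) ` X \<subseteq> Y"
  proof (rule image_subsetI)
    fix A assume "A \<in> X"
    then show "(part E 0 A, part E 1 A, part E 2 A) \<in> Y"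
      using spanning_forests_Suc_Suc_iff[OF forest_edges, of A n q] by (simp add: X_def Y_def E_def)
  qed
  show "(\<lambda>(a, b, c). assemble E ((!) [a, b, c])) ` Y \<subseteq> X"
  proof (rule image_subsetI, clarify)
    fix a b c assume "(a, b, c) \<in> Y"
    then have abc: "a \<in> spanning_forests E" "b \<in> spanning_forests E" "c \<in> spanning_forests E"
      and glued: "glues_to ((!) [outer_pattern (Suc n) a, outer_pattern (Suc n) b, outer_pattern (Suc n) c]) q"
      by (simp_all add: Y_def)
    let ?B = "assemble E ((!) [a, b, c])"
    have "?B \<subseteq> edges (sierpinski (Suc (Suc n)))"
      unfolding edges_eq by (rule assemble_subset_edges)
    moreover have "part E j ?B = [a, b, c] ! j" if "j < 3" for j
      using parts_assemble[OF abc that] .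
    ultimately show "?B \<in> X"
      using spanning_forests_Suc_Suc_iff[of ?B n q] abc glued
      by (auto simp: X_def E_def dest: less_3_cases)
  qed
qed

lemma sum_by_class:
  assumes "finite Z" "finite P" "h ` Z \<subseteq> P"
  shows "(\<Sum>a\<in>Z. (f (h a) :: nat)) = (\<Sum>p\<in>P. card {a\<in>Z. h a = p} * f p)"
proof -
  have "(\<Sum>a\<in>Z. f (h a)) = (\<Sum>p\<in>P. \<Sum>a\<in>{a \<in> Z. h a = p}. f (h a))"
    using sum.group[OF assms, of "\<lambda>a. f (h a)"] by simp
  also have "\<dots> = (\<Sum>p\<in>P. card {a\<in>Z. h a = p} * f p)"
    by (rule sum.cong) auto
  finally show ?thesis .
qed

lemma card_triples_by_class:
  assumes Z: "finite Z" and P: "finite P" and h: "h ` Z \<subseteq> P"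
  shows "card {(a, b, c). a \<in> Z \<and> b \<in> Z \<and> c \<in> Z \<and> \<Phi> (h a) (h b) (h c)} =
    (\<Sum>p0\<in>P. \<Sum>p1\<in>P. \<Sum>p2\<in>P. if \<Phi> p0 p1 p2
      then card {a\<in>Z. h a = p0} * card {a\<in>Z. h a = p1} * card {a\<in>Z. h a = p2} else 0)"
proof -
  let ?c = "\<lambda>p. card {a\<in>Z. h a = p}"
  have "{(a, b, c). a \<in> Z \<and> b \<in> Z \<and> c \<in> Z \<and> \<Phi> (h a) (h b) (h c)} =
      {x \<in> Z \<times> Z \<times> Z. \<Phi> (h (fst x)) (h (fst (snd x))) (h (snd (snd x)))}"
    by auto
  then have "card {(a, b, c). a \<in> Z \<and> b \<in> Z \<and> c \<in> Z \<and> \<Phi> (h a) (h b) (h c)} =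
      (\<Sum>x\<in>Z \<times> Z \<times> Z. if \<Phi> (h (fst x)) (h (fst (snd x))) (h (snd (snd x))) then 1 else 0)"
    using Z by (simp add: sum.inter_filter[symmetric])
  also have "\<dots> = (\<Sum>a\<in>Z. \<Sum>b\<in>Z. \<Sum>c\<in>Z. if \<Phi> (h a) (h b) (h c) then 1 else 0)"
    by (simp add: sum.cartesian_product split_def)
  also have "\<dots> = (\<Sum>a\<in>Z. \<Sum>b\<in>Z. \<Sum>p2\<in>P. ?c p2 * (if \<Phi> (h a) (h b) p2 then 1 else 0))"
    by (intro sum.cong refl sum_by_class[OF Z P h])
  also have "\<dots> = (\<Sum>a\<in>Z. \<Sum>p1\<in>P. ?c p1 * (\<Sum>p2\<in>P. ?c p2 * (if \<Phi> (h a) p1 p2 then 1 else 0)))"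
    by (intro sum.cong refl sum_by_class[OF Z P h])
  also have "\<dots> = (\<Sum>p0\<in>P. ?c p0 * (\<Sum>p1\<in>P. ?c p1 * (\<Sum>p2\<in>P. ?c p2 * (if \<Phi> p0 p1 p2 then 1 else 0))))"
    by (rule sum_by_class[OF Z P h])
  also have "\<dots> = (\<Sum>p0\<in>P. \<Sum>p1\<in>P. \<Sum>p2\<in>P. if \<Phi> p0 p1 p2 then ?c p0 * ?c p1 * ?c p2 else 0)"
    by (simp add: sum_distrib_left mult.assoc) (intro sum.cong refl, auto)
  finally show ?thesis .
qed

lemma forest_count_Suc_Suc:
  "forest_count (Suc (Suc n)) q = (\<Sum>p0\<in>patterns. \<Sum>p1\<in>patterns. \<Sum>p2\<in>patterns.
     if glues_to ((!) [p0, p1, p2]) q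
     then forest_count (Suc n) p0 * forest_count (Suc n) p1 * forest_count (Suc n) p2 else 0)"
proof -
  have "outer_pattern (Suc n) ` spanning_forests (sierpinski (Suc n)) \<subseteq> patterns"
    by (auto simp: outer_pattern_def terminal_pattern_in_patterns)
  moreover have "finite patterns"
    by (simp add: patterns_def)
  ultimately show ?thesis
    unfolding forest_count_def bij_betw_same_card[OF bij_betw_parts]
    using card_triples_by_class[OF finite_spanning_forests, of patterns "outer_pattern (Suc n)" _
      "\<lambda>p0 p1 p2. glues_to ((!) [p0, p1, p2]) q"] by simp
qed

lemma forest_count_recurrences:
  assumes "forest_count (Suc n) (True, False, False) = N" "forest_count (Suc n) (False, True, False) = N"
    "forest_count (Suc n) (False, False, True) = N" "forest_count (Suc n) (True, True, True) = T"
    "forest_count (Suc n) (False, False, False) = M"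
  shows "forest_count (Suc (Suc n)) (True, True, True) = 6 * T^2 * N + 3 * T * N^2"
    and "forest_count (Suc (Suc n)) (True, False, False) = T^2 * M + 7 * T * N^2 + 2 * T * N * M + 4 * N^3 + N^2 * M"
    and "forest_count (Suc (Suc n)) (False, True, False) = T^2 * M + 7 * T * N^2 + 2 * T * N * M + 4 * N^3 + N^2 * M"
    and "forest_count (Suc (Suc n)) (False, False, True) = T^2 * M + 7 * T * N^2 + 2 * T * N * M + 4 * N^3 + N^2 * M"
    and "forest_count (Suc (Suc n)) (False, False, False) =
      12 * T * N * M + 3 * T * M^2 + 14 * N^3 + 24 * N^2 * M + 9 * N * M^2 + M^3"
  unfolding forest_count_Suc_Suc
  by (simp_all add: assms patterns_def glues_to_def glue_acyclic_def glue_pattern_def glue3_def glue2_def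
    glue1_def copy_conn_def join_conn_def pattern_conn_def power2_eq_square power3_eq_cube algebra_simps)

lemma sum_Pow_insert:
  assumes "e \<notin> B" and "finite B"
  shows "(\<Sum>A\<in>Pow (insert e B). f A) = (\<Sum>A\<in>Pow B. f A) + (\<Sum>A\<in>Pow B. f (insert e A))"
proof -
  have "Pow B \<inter> insert e ` Pow B = {}" and "inj_on (insert e) (Pow B)"
    using assms(1) by (auto simp: inj_on_def)
  then show ?thesis
    unfolding Pow_insert using assms(2) by (simp add: sum.union_disjoint sum.reindex)
qed

lemma forest_count_eq_sum:
  "forest_count n p = (\<Sum>A\<in>Pow (edges (sierpinski n)).
    if nullity (sierpinski n) A = 0 \<and> outer_pattern n A = p then 1 else 0)"
proof -
  have "{A \<in> spanning_forests (sierpinski n). outer_pattern n A = p} =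
      {A \<in> Pow (edges (sierpinski n)). nullity (sierpinski n) A = 0 \<and> outer_pattern n A = p}"
    by (auto simp: spanning_forests_nullity)
  moreover have "finite (Pow (edges (sierpinski n)))"
    by (simp add: edges_def)
  ultimately show ?thesis
    unfolding forest_count_def by (simp only: card_eq_sum sum.inter_filter)
qed

lemma forest_count_1:
  "forest_count 1 (True, True, True) = 3" "forest_count 1 (True, False, False) = 1"
  "forest_count 1 (False, True, False) = 1" "forest_count 1 (False, False, True) = 1"
  "forest_count 1 (False, False, False) = 1"
proof -
  have "edges (sierpinski 1) = {0, 1, 2}"
    by (auto simp: edges_def)
  then show "forest_count 1 (True, True, True) = 3" "forest_count 1 (True, False, False) = 1"
    "forest_count 1 (False, True, False) = 1" "forest_count 1 (False, False, True) = 1"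
    "forest_count 1 (False, False, False) = 1"
    by (simp_all add: forest_count_eq_sum sum_Pow_insert nullity_insert conn_insert_iff edges_def
      outer_pattern_def terminal_pattern_def corner_def)
qed

lemma forest_count_symmetric:
  "forest_count (Suc m) (True, False, False) = forest_count (Suc m) (False, False, True)
    \<and> forest_count (Suc m) (False, True, False) = forest_count (Suc m) (False, False, True)"
proof (induction m)
  case 0
  then show ?case
    using forest_count_1 by simp
next
  case (Suc m)
  note rec = forest_count_recurrences[OF conjunct1[OF Suc.IH] conjunct2[OF Suc.IH] refl refl refl]
  show ?case
    unfolding rec(2-4) by simp
qed

lemma card_spanning_forests_by_pattern:
  "card (spanning_forests (sierpinski n)) = forest_count n (True, True, True) + forest_count n (True, False, False)
    + forest_count n (False, True, False) + forest_count n (False, False, True) + forest_count n (False, False, False)"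
proof -
  have img: "outer_pattern n ` spanning_forests (sierpinski n) \<subseteq> patterns"
    by (auto simp: outer_pattern_def terminal_pattern_in_patterns)
  have fin: "finite patterns"
    by (simp add: patterns_def)
  show ?thesis
    using sum_by_class[OF finite_spanning_forests fin img, where f = "\<lambda>_. 1"]
    by (simp add: patterns_def forest_count_def add.assoc)
qed

section \<open>The Tutte polynomials at (2, 1)\<close>

lemma outer_pattern_eq:
  "outer_pattern n A = (conn (sierpinski n) A (s_top n) (s_left n), conn (sierpinski n) A (s_top n) (s_right n),
    conn (sierpinski n) A (s_left n) (s_right n))"
  unfolding outer_pattern_def terminal_pattern_def outer_corners ..

lemma outer_pattern_in_patterns: "outer_pattern n A \<in> patterns"
  by (simp add: outer_pattern_def terminal_pattern_in_patterns)

lemma tutte_weight_2_1: "tutte_weight G 2 1 A = of_bool (nullity G A = 0)"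
  by (simp add: tutte_weight_def)

lemma sum_tutte_weight_2_1:
  "(\<Sum>A\<in>{A \<in> Pow (edges G). P A}. tutte_weight G 2 1 A) = real (card {A \<in> spanning_forests G. P A})"
proof -
  have "finite {A \<in> Pow (edges G). P A}"
    by (simp add: edges_def)
  then have "(\<Sum>A\<in>{A \<in> Pow (edges G). P A}. tutte_weight G 2 1 A) =
      real (card ({A \<in> Pow (edges G). P A} \<inter> {A. nullity G A = 0}))"
    by (simp add: tutte_weight_2_1 of_bool_def sum.If_cases)
  also have "{A \<in> Pow (edges G). P A} \<inter> {A. nullity G A = 0} = {A \<in> spanning_forests G. P A}"
    by (auto simp: spanning_forests_nullity)
  finally show ?thesis .
qed

lemma Tn_2_1: "Tn n 2 1 = real (card (spanning_forests (sierpinski n)))"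
  using sum_tutte_weight_2_1[of "sierpinski n" "\<lambda>_. True"] by (simp add: Tn_def tutte_def Pow_def)

lemma T2n_2_1: "T2n n 2 1 = real (forest_count n (True, True, True))"
proof -
  have "{A \<in> spanning_forests (sierpinski n). conn (sierpinski n) A (s_top n) (s_left n)
      \<and> conn (sierpinski n) A (s_top n) (s_right n)} =
    {A \<in> spanning_forests (sierpinski n). outer_pattern n A = (True, True, True)}"
    using outer_pattern_in_patterns[of n] by (auto simp: outer_pattern_eq patterns_def)
  then show ?thesis
    unfolding T2n_def sum_tutte_weight_2_1 forest_count_def by simp
qed

lemma Nn_2_1: "Nn n 2 1 = real (forest_count n (False, False, True))"
proof -
  have "{A \<in> spanning_forests (sierpinski n). conn (sierpinski n) A (s_left n) (s_right n)
      \<and> \<not> conn (sierpinski n) A (s_top n) (s_left n)} =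
    {A \<in> spanning_forests (sierpinski n). outer_pattern n A = (False, False, True)}"
    using outer_pattern_in_patterns[of n] by (auto simp: outer_pattern_eq patterns_def)
  then show ?thesis
    unfolding Nn_def T1n_def sum_tutte_weight_2_1 forest_count_def by simp
qed

lemma Mn_2_1: "Mn n 2 1 = real (forest_count n (False, False, False))"
proof -
  have "{A \<in> spanning_forests (sierpinski n). \<not> conn (sierpinski n) A (s_top n) (s_left n)
      \<and> \<not> conn (sierpinski n) A (s_top n) (s_right n) \<and> \<not> conn (sierpinski n) A (s_left n) (s_right n)} =
    {A \<in> spanning_forests (sierpinski n). outer_pattern n A = (False, False, False)}"
    by (auto simp: outer_pattern_eq)
  then show ?thesis
    unfolding Mn_def T0n_def sum_tutte_weight_2_1 forest_count_def by simp
qed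

lemma spanning_forest_recurrences:
  fixes n :: nat
  assumes "n \<ge> 1"
  defines "T \<equiv> T2n n 2 1" and "N \<equiv> Nn n 2 1" and "M \<equiv> Mn n 2 1"
  shows "Tn n 2 1 = T + 3 * N + M"
    and "T2n (n + 1) 2 1 = 6 * T^2 * N + 3 * T * N^2"
    and "Nn (n + 1) 2 1 = T^2 * M + 7 * T * N^2 + 2 * T * N * M + 4 * N^3 + N^2 * M"
    and "Mn (n + 1) 2 1 = 12 * T * N * M + 3 * T * M^2 + 14 * N^3 + 24 * N^2 * M + 9 * N * M^2 + M^3"
proof -
  obtain m where n: "n = Suc m"
    using assms(1) by (cases n) auto
  note sym = forest_count_symmetric[of m]
  note rec = forest_count_recurrences[OF conjunct1[OF sym] conjunct2[OF sym] refl refl refl]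
  show "Tn n 2 1 = T + 3 * N + M"
    using sym by (simp add: Tn_2_1 card_spanning_forests_by_pattern T_def N_def M_def T2n_2_1 Nn_2_1 Mn_2_1 n)
  show "T2n (n + 1) 2 1 = 6 * T^2 * N + 3 * T * N^2"
    using rec(1) by (simp add: T_def N_def T2n_2_1 Nn_2_1 n)
  show "Nn (n + 1) 2 1 = T^2 * M + 7 * T * N^2 + 2 * T * N * M + 4 * N^3 + N^2 * M"
    using rec(4) by (simp add: T_def N_def M_def T2n_2_1 Nn_2_1 Mn_2_1 n)
  show "Mn (n + 1) 2 1 = 12 * T * N * M + 3 * T * M^2 + 14 * N^3 + 24 * N^2 * M + 9 * N * M^2 + M^3"
    using rec(5) by (simp add: T_def N_def M_def T2n_2_1 Nn_2_1 Mn_2_1 n)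
qed

theorem proposition3p7:
  "(\<forall>n\<ge>1. real (card (spanning_forests (sierpinski n))) = Tn n 2 1
          \<and> Tn n 2 1 = T2n n 2 1 + 3 * Nn n 2 1 + Mn n 2 1
          \<and> T2n (n+1) 2 1 = 6 * (T2n n 2 1)^2 * Nn n 2 1 + 3 * T2n n 2 1 * (Nn n 2 1)^2
          \<and> Nn (n+1) 2 1 = (T2n n 2 1)^2 * Mn n 2 1 + 7 * T2n n 2 1 * (Nn n 2 1)^2
              + 2 * T2n n 2 1 * Nn n 2 1 * Mn n 2 1 + 4 * (Nn n 2 1)^3 + (Nn n 2 1)^2 * Mn n 2 1
          \<and> Mn (n+1) 2 1 = 12 * T2n n 2 1 * Nn n 2 1 * Mn n 2 1 + 3 * T2n n 2 1 * (Mn n 2 1)^2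
              + 14 * (Nn n 2 1)^3 + 24 * (Nn n 2 1)^2 * Mn n 2 1 + 9 * Nn n 2 1 * (Mn n 2 1)^2
              + (Mn n 2 1)^3)
   \<and> T2n 1 2 1 = 3 \<and> Nn 1 2 1 = 1 \<and> Mn 1 2 1 = 1"
  using spanning_forest_recurrences Tn_2_1 forest_count_1 by (simp add: T2n_2_1 Nn_2_1 Mn_2_1)

end
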